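(* For $L>0$, let $\mathcal{L}_L$ be the set of graphs $g=(V,E)\in\mathcal{G}$ such that whenever $x,y\in V$ with $0<|x-y|\le L$, we have $\{x,y\}\in E$. For any $L>0$, $\gamma>1$, $p\in[1,\infty)$ and $b>p+1$, $$\mathbb{P}^{b,p}_{N,\gamma}(G_N\in\mathcal{L}_L)\xrightarrow{N\to\infty}1.$$ In particular, for such $\gamma,p,b$, the random rooted graph $(G_N,\mathcal{O}_N)$ sampled from $\mathbb{P}^{b,p}_{N,\gamma}\otimes\mathcal{U}_N$ does not converge in distribution (to any random rooted graph in $\mathcal{G}$), where $\mathcal{U}_N$ is the uniform measure on $\{1,\dots,N\}$.
   Context: $\mathcal{G}$ is the set of locally finite graphs $g=(V,E)$ with $V\subset\mathbb{Z}$; $d_g(x,y)$ denotes graph distance in $g$. For a finite $g=(V,E)\in\mathcal{G}$ with $N=|V|$ and $p\in[1,\infty)$, $\mathcal{H}_p(g)=\big(\binom{N}{2}^{-1}\sum_{x,y\in V,\,x<y}d_g(x,y)^p\big)^{1/p}$. For $N\ge1$, $\gamma>0$, $\mathbb{P}_{N,\gamma}$ is the law of the random graph $G_N$ on vertex set $[N]=\{1,\dots,N\}$ containing every edge $\{x,y\}$ with $|x-y|=1$ and in which each pair $\{x,y\}$ with $|x-y|>1$ is an edge independently with probability $\exp\{-|x-y|^\gamma\}$. For $b\in\mathbb{R}$, $\mathbb{P}^{b,p}_{N,\gamma}(g)=\frac{1}{Z^{b,p}_{N,\gamma}}\exp\{-N^b\mathcal{H}_p(g)\}\mathbb{P}_{N,\gamma}(g)$,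 $Z^{b,p}_{N,\gamma}$ the normalizing constant. Rooted graphs, $\simeq$, balls and convergence in distribution: a rooted graph is $(g,o)$ with $g\in\mathcal{G}$, $o$ a vertex of $g$; $(g,o)\simeq(g',o')$ if the translation $x\mapsto x-o+o'$ maps $g$ exactly onto $g'$; $B_{(g,o)}(R)$ is the rooted induced subgraph on $\{x:d_g(o,x)\le R\}$; $(G_n,\mathcal{O}_n)\to(G,\mathcal{O})$ in distribution if for every $R$ and every rooted graph $(g,o)$, $P(B_{(G_n,\mathcal{O}_n)}(R)\simeq(g,o))\to P(B_{(G,\mathcal{O})}(R)\simeq(g,o))$. *)

theory Defs
  imports "HOL-Probability.Probability"
begin

type_synonym graph = "int set \<times> int set set"
type_synonym rgraph = "graph \<times> int"

definition verts :: "graph \<Rightarrow> int set" where "verts g = fst g"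
definition edges :: "graph \<Rightarrow> int set set" where "edges g = snd g"

definition in_G :: "graph \<Rightarrow> bool" where
  "in_G g \<longleftrightarrow>
     (\<forall>e\<in>edges g. \<exists>x y. x \<noteq> y \<and> x \<in> verts g \<and> y \<in> verts g \<and> e = {x, y}) \<and>
     (\<forall>x\<in>verts g. finite {y. {x, y} \<in> edges g})"

definition reach :: "graph \<Rightarrow> nat \<Rightarrow> int \<Rightarrow> int \<Rightarrow> bool" where
  "reach g n x y \<longleftrightarrow> x \<in> verts g \<and>
     (\<exists>ps :: int list. length ps = n + 1 \<and> hd ps = x \<and> last ps = y \<and>
        (\<forall>i<n. {ps ! i, ps ! (i + 1)} \<in> edges g))"

text \<open>Graph distance (used only for connected graphs).\<close>
definition gdist :: "graph \<Rightarrow> int \<Rightarrow> int \<Rightarrow> nat" where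
  "gdist g x y = (LEAST n. reach g n x y)"

definition Hp :: "real \<Rightarrow> graph \<Rightarrow> real" where
  "Hp p g = ((\<Sum>(x, y) \<in> {(x, y). x \<in> verts g \<and> y \<in> verts g \<and> x < y}.
                  real (gdist g x y) powr p) / real (card (verts g) choose 2)) powr (1 / p)"

definition rooted_in_G :: "rgraph \<Rightarrow> bool" where
  "rooted_in_G h \<longleftrightarrow> in_G (fst h) \<and> snd h \<in> verts (fst h)"

definition ball :: "rgraph \<Rightarrow> nat \<Rightarrow> rgraph" where
  "ball h R = (let g = fst h; r = snd h; B = {x. \<exists>n\<le>R. reach g n r x}
               in ((B, {e \<in> edges g. e \<subseteq> B}), r))"

definition rg_iso :: "rgraph \<Rightarrow> rgraph \<Rightarrow> bool" where
  "rg_iso h h' \<longleftrightarrow>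
     (let t = (\<lambda>x. x - snd h + snd h') in
        verts (fst h') = t ` verts (fst h) \<and> edges (fst h') = (\<lambda>e. t ` e) ` edges (fst h))"

definition pairsN :: "nat \<Rightarrow> (int \<times> int) set" where
  "pairsN N = {(x, y). 1 \<le> x \<and> x < y \<and> y \<le> int N}"

definition edge_prob :: "real \<Rightarrow> int \<Rightarrow> int \<Rightarrow> real" where
  "edge_prob \<gamma> x y = (if \<bar>x - y\<bar> = 1 then 1 else exp (- (real_of_int \<bar>x - y\<bar> powr \<gamma>)))"

definition edge_sets :: "nat \<Rightarrow> int set set set" where
  "edge_sets N = Pow {{x, y} | x y. (x, y) \<in> pairsN N}"

definition graph_of :: "nat \<Rightarrow> int set set \<Rightarrow> graph" where
  "graph_of N E = ({1..int N}, E)"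

definition PN :: "real \<Rightarrow> nat \<Rightarrow> int set set \<Rightarrow> real" where
  "PN \<gamma> N E = (\<Prod>(x, y) \<in> pairsN N.
      if {x, y} \<in> E then edge_prob \<gamma> x y else 1 - edge_prob \<gamma> x y)"

definition tweight :: "real \<Rightarrow> real \<Rightarrow> real \<Rightarrow> nat \<Rightarrow> int set set \<Rightarrow> real" where
  "tweight b p \<gamma> N E = exp (- (real N powr b) * Hp p (graph_of N E)) * PN \<gamma> N E"

definition Zc :: "real \<Rightarrow> real \<Rightarrow> real \<Rightarrow> nat \<Rightarrow> real" where
  "Zc b p \<gamma> N = (\<Sum>E\<in>edge_sets N. tweight b p \<gamma> N E)"

definition tilted_prob :: "real \<Rightarrow> real \<Rightarrow> real \<Rightarrow> nat \<Rightarrow> (graph \<Rightarrow> bool) \<Rightarrow> real" where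
  "tilted_prob b p \<gamma> N Q =
     (\<Sum>E\<in>{E \<in> edge_sets N. Q (graph_of N E)}. tweight b p \<gamma> N E) / Zc b p \<gamma> N"

definition rooted_tilted_prob :: "real \<Rightarrow> real \<Rightarrow> real \<Rightarrow> nat \<Rightarrow> (rgraph \<Rightarrow> bool) \<Rightarrow> real" where
  "rooted_tilted_prob b p \<gamma> N Q =
     (\<Sum>E\<in>edge_sets N. \<Sum>v\<in>{1..int N}.
        if Q (graph_of N E, v) then tweight b p \<gamma> N E / (Zc b p \<gamma> N * real N) else 0)"

definition LL :: "real \<Rightarrow> graph set" where
  "LL L = {g. in_G g \<and> (\<forall>x\<in>verts g. \<forall>y\<in>verts g.
              0 < \<bar>x - y\<bar> \<and> real_of_int \<bar>x - y\<bar> \<le> L \<longrightarrow> {x, y} \<in> edges g)}"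

definition random_rooted_graph :: "rgraph measure \<Rightarrow> bool" where
  "random_rooted_graph M \<longleftrightarrow> prob_space M \<and> space M \<subseteq> {h. rooted_in_G h} \<and>
     (\<forall>R h. {x \<in> space M. rg_iso (ball x R) h} \<in> sets M)"

definition conv_distr :: "(nat \<Rightarrow> (rgraph \<Rightarrow> bool) \<Rightarrow> real) \<Rightarrow> rgraph measure \<Rightarrow> bool" where
  "conv_distr \<mu> M \<longleftrightarrow> (\<forall>R h. rooted_in_G h \<longrightarrow>
     ((\<lambda>N. \<mu> N (\<lambda>x. rg_iso (ball x R) h)) \<longlongrightarrow>
        measure M {x \<in> space M. rg_iso (ball x R) h}) sequentially)"

end

theory Submission
  imports Defs "HOL-Real_Asymp.Real_Asymp"
begin

(*
  Deleting a set D of short edges (length at most L) from a graph that keeps all nearest-neighbour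
  edges multiplies its P_{N,gamma}-weight by at most exp(L^gamma)^|D|.  On the other hand each
  deleted edge raises the distance of its endpoints from 1 to at least 2, so the sum of p-th powers
  of distances grows by |D|; as this sum is O(N^(2+p)) and t |-> t^(1/p) is concave, H_p grows by
  at least |D| N^(-1-p)/(2p), and the tilt costs a factor exp(-N^(b-1-p)/(2p)) per deleted edge.
  Writing every graph that misses a short edge uniquely as F - D with F containing all short
  edges, the tilted mass outside L_L is at most (1 + delta_N)^(N^2) - 1 times the mass of L_L,
  where delta_N = exp(L^gamma - N^(b-1-p)/(2p)), and N^2 delta_N -> 0 because b > p + 1.

  For the second claim: with high probability every ball of radius 1 has more than k vertices,
  so the limit law would give probability 0 to the ball being a translate of any of the countably
  many finite rooted graphs, although the ball of radius 1 of any locally finite rooted graph is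
  one of them.
*)

lemma powr_tangent_le:
  fixes a c r :: real
  assumes "0 \<le> c" "c \<le> a" "0 < a" "0 < r" "r \<le> 1"
  shows "r * (a - c) * a powr (r - 1) \<le> a powr r - c powr r"
proof -
  have ar: "a powr (r - 1) = a powr r / a" using assms by (simp add: powr_diff)
  show ?thesis
  proof (cases "c = 0")
    case True
    then show ?thesis using assms ar by simp
  next
    case False
    have "(c / a) powr r * 1 powr (1 - r) \<le> r * (c / a) + (1 - r) * 1"
      using assms False by (intro Youngs_inequality_0) auto
    then have "c powr r \<le> a powr r * (r * (c / a) + (1 - r))"
      using assms by (simp add: powr_divide divide_le_eq mult.commute)
    also have "\<dots> = a powr r - r * (a - c) * (a powr r / a)"
      using assms by (simp add: field_simps)
    finally show ?thesis using ar by simp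
  qed
qed

lemma powr_root_minus_one_ge:
  fixes a n p :: real
  assumes p: "p \<ge> 1" and n: "0 < n" and a: "0 < a" "a \<le> 4 * n powr p"
  shows "n powr (1 - p) / 4 \<le> a powr (1 / p - 1)"
proof -
  have "(4 * n powr p) powr (1 / p - 1) \<le> a powr (1 / p - 1)"
    using p a by (intro powr_mono2') (auto simp: field_simps)
  moreover have "(4 * n powr p) powr (1 / p - 1) = 4 powr (1 / p - 1) * n powr (1 - p)"
  proof -
    have "p * (1 / p - 1) = 1 - p" using p by (simp add: right_diff_distrib)
    then show ?thesis by (simp add: powr_mult powr_powr)
  qed
  moreover have "(1 / 4 :: real) \<le> 4 powr (1 / p - 1)"
    using p powr_mono[of "-1" "1 / p - 1" "4::real"] by (simp add: powr_minus_divide)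
  ultimately show ?thesis
    using mult_right_mono[of "1/4" "4 powr (1 / p - 1)" "n powr (1 - p)"] by simp
qed

lemma root_mean_increment:
  fixes n C s t m p :: real
  assumes p: "p \<ge> 1" and n: "0 < n" and C: "n\<^sup>2 / 4 \<le> C" "C \<le> n\<^sup>2 / 2"
    and s: "0 \<le> s" and m: "0 \<le> m" and st: "s + m \<le> t" and t: "t \<le> n\<^sup>2 * n powr p"
  shows "(s / C) powr (1 / p) + m * (n powr (-1 - p) / (2 * p)) \<le> (t / C) powr (1 / p)"
proof -
  define a c r where "a = t / C" and "c = s / C" and "r = 1 / p"
  have n2: "0 < n\<^sup>2" using n by simp
  have Cpos: "0 < C" using n2 C(1) by linarith
  have r: "0 < r" "r \<le> 1" using p by (auto simp: r_def)
  have c: "0 \<le> c" using s Cpos by (simp add: c_def)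
  have ca: "c + m / C \<le> a" using st Cpos by (simp add: a_def c_def add_divide_distrib[symmetric] divide_right_mono)
  show ?thesis
  proof (cases "m = 0")
    case True
    then show ?thesis using ca c r by (simp add: powr_mono2 flip: a_def c_def r_def)
  next
    case False
    then have "0 < m / C" using m Cpos by simp
    then have apos: "0 < a" and c_le_a: "c \<le> a" using c ca by linarith+
    have "a \<le> n\<^sup>2 * n powr p / (n\<^sup>2 / 4)"
      unfolding a_def using t C(1) n2 by (intro frac_le) simp_all
    also have "\<dots> = 4 * n powr p" using n2 by simp
    finally have pow: "n powr (1 - p) / 4 \<le> a powr (r - 1)"
      unfolding r_def using p n apos by (intro powr_root_minus_one_ge)
    have "m / (n\<^sup>2 / 2) \<le> m / C"
      using C(2) Cpos m n2 by (intro divide_left_mono) auto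
    then have diff: "2 * m / n\<^sup>2 \<le> a - c" using ca by (simp add: mult.commute)
    have "n powr (-1 - p) = n powr ((1 - p) - 2)" by simp
    also have "\<dots> = n powr (1 - p) / n\<^sup>2"
      using n by (simp only: powr_diff powr_numeral)
    finally have "m * (n powr (-1 - p) / (2 * p)) = r * (2 * m / n\<^sup>2) * (n powr (1 - p) / 4)"
      using p n2 by (simp add: r_def field_simps)
    also have "\<dots> \<le> r * (a - c) * a powr (r - 1)"
      using diff pow r m c_le_a by (intro mult_mono mult_left_mono) auto
    also have "\<dots> \<le> a powr r - c powr r"
      using powr_tangent_le[OF c c_le_a apos r] .
    finally show ?thesis unfolding a_def c_def r_def by linarith
  qed
qed

lemma choose_2_bounds:
  assumes "N \<ge> 2"
  shows "real N ^ 2 / 4 \<le> real (N choose 2)" "real (N choose 2) \<le> real N ^ 2 / 2"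
proof -
  have "even (N * (N - 1))" by (cases N) auto
  then have "2 * (N choose 2) = N * (N - 1)" by (simp add: choose_two)
  then have e: "2 * real (N choose 2) = real N * (real N - 1)"
    using assms by (metis of_nat_1 of_nat_diff of_nat_mult of_nat_numeral le_trans one_le_numeral)
  have "2 * real N \<le> real N * real N" using assms by (intro mult_right_mono) auto
  then show "real N ^ 2 / 4 \<le> real (N choose 2)" "real (N choose 2) \<le> real N ^ 2 / 2"
    using e by (simp_all add: power2_eq_square algebra_simps)
qed

lemma one_plus_power_le_exp:
  fixes \<delta> K :: real
  assumes "0 \<le> \<delta>" "real k \<le> K"
  shows "(1 + \<delta>) ^ k \<le> exp (K * \<delta>)"
proof -
  have "(1 + \<delta>) ^ k \<le> exp \<delta> ^ k"
    using assms by (intro power_mono) (simp_all add: exp_ge_add_one_self add.commute)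
  also have "\<dots> = exp (real k * \<delta>)" by (simp add: exp_of_nat_mult)
  also have "\<dots> \<le> exp (K * \<delta>)" using assms by (simp add: mult_right_mono)
  finally show ?thesis .
qed

lemma sum_filter_split: "finite A \<Longrightarrow> sum f A = sum f {x\<in>A. P x} + sum f {x\<in>A. \<not> P x}"
  using sum.Int_Diff[of A f "{x. P x}"] by (simp add: Int_def set_diff_eq)

lemma sum_Pow_power_card:
  fixes \<delta> :: real
  assumes "finite S"
  shows "(\<Sum>D\<in>Pow S - {{}}. \<delta> ^ card D) = (1 + \<delta>) ^ card S - 1"
proof -
  have "(1 + \<delta>) ^ card S = (\<Prod>x\<in>S. \<delta> + 1)" by (simp add: add.commute)
  also have "\<dots> = (\<Sum>D\<in>Pow S. \<delta> ^ card D)"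
    using prod_add[OF assms, of "\<lambda>_. \<delta>" "\<lambda>_. 1"] by simp
  also have "\<dots> = 1 + (\<Sum>D\<in>Pow S - {{}}. \<delta> ^ card D)"
    using assms by (subst sum.remove[of _ "{}"]) auto
  finally show ?thesis by simp
qed

lemma sum_not_supset_le:
  fixes w :: "'a set \<Rightarrow> real"
  assumes U: "finite U" "S \<subseteq> U" and \<delta>: "0 \<le> \<delta>"
    and w: "\<And>F D. F \<subseteq> U \<Longrightarrow> S \<subseteq> F \<Longrightarrow> D \<subseteq> S \<Longrightarrow> w (F - D) \<le> \<delta> ^ card D * w F"
  shows "(\<Sum>E\<in>{E\<in>Pow U. \<not> S \<subseteq> E}. w E) \<le> (\<Sum>F\<in>{F\<in>Pow U. S \<subseteq> F}. w F) * ((1 + \<delta>) ^ card S - 1)"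
proof -
  define A where "A = {F\<in>Pow U. S \<subseteq> F}"
  define B where "B = Pow S - {{}}"
  have S: "finite S" using U by (rule finite_subset[rotated])
  \<comment> \<open>every \<open>E\<close> with \<open>\<not> S \<subseteq> E\<close> is uniquely \<open>F - D\<close> with \<open>S \<subseteq> F\<close> and \<open>{} \<noteq> D \<subseteq> S\<close>\<close>
  have "bij_betw (\<lambda>(F, D). F - D) (A \<times> B) {E\<in>Pow U. \<not> S \<subseteq> E}"
    by (rule bij_betw_byWitness[where f' = "\<lambda>E. (E \<union> S, S - E)"]) (use U in \<open>auto simp: A_def B_def\<close>)
  then have "(\<Sum>E\<in>{E\<in>Pow U. \<not> S \<subseteq> E}. w E) = (\<Sum>(F, D)\<in>A \<times> B. w (F - D))"
    by (simp add: sum.reindex_bij_betw[symmetric] case_prod_beta)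
  also have "\<dots> = (\<Sum>F\<in>A. \<Sum>D\<in>B. w (F - D))"
    by (rule sum.cartesian_product[symmetric])
  also have "\<dots> \<le> (\<Sum>F\<in>A. \<Sum>D\<in>B. \<delta> ^ card D * w F)"
    by (intro sum_mono w) (auto simp: A_def B_def)
  also have "\<dots> = (\<Sum>F\<in>A. w F * (\<Sum>D\<in>B. \<delta> ^ card D))"
    by (simp add: sum_distrib_left mult.commute)
  also have "\<dots> = (\<Sum>F\<in>A. w F) * ((1 + \<delta>) ^ card S - 1)"
    by (simp add: B_def sum_Pow_power_card[OF S] sum_distrib_right)
  finally show ?thesis by (simp add: A_def)
qed

section \<open>Edge sets of graphs on [N]\<close>

definition pair_edge :: "int \<times> int \<Rightarrow> int set" where
  "pair_edge xy = {fst xy, snd xy}"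

definition all_edges :: "nat \<Rightarrow> int set set" where
  "all_edges N = pair_edge ` pairsN N"

definition short_edges :: "real \<Rightarrow> nat \<Rightarrow> int set set" where
  "short_edges L N = pair_edge ` {xy \<in> pairsN N. real_of_int (snd xy - fst xy) \<le> L}"

lemma finite_pairsN: "finite (pairsN N)"
  by (rule finite_subset[of _ "{1..int N} \<times> {1..int N}"]) (auto simp: pairsN_def)

lemma card_pairsN_le: "card (pairsN N) \<le> N * N"
proof -
  have "card (pairsN N) \<le> card ({1..int N} \<times> {1..int N})"
    by (rule card_mono) (auto simp: pairsN_def)
  then show ?thesis by (simp add: card_cartesian_product)
qed

lemma inj_on_pair_edge: "inj_on pair_edge (pairsN N)"
  by (rule inj_onI) (auto simp: pairsN_def pair_edge_def doubleton_eq_iff)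

lemma finite_all_edges: "finite (all_edges N)"
  by (simp add: all_edges_def finite_pairsN)

lemma short_edges_subset: "short_edges L N \<subseteq> all_edges N"
  by (auto simp: short_edges_def all_edges_def)

lemma card_short_edges_le: "card (short_edges L N) \<le> N * N"
proof -
  have "card (short_edges L N) \<le> card (all_edges N)"
    by (rule card_mono[OF finite_all_edges short_edges_subset])
  also have "\<dots> \<le> N * N"
    unfolding all_edges_def using card_image_le[OF finite_pairsN] card_pairsN_le le_trans by blast
  finally show ?thesis .
qed

lemma all_edges_eq: "all_edges N = {{x, y} | x y. (x, y) \<in> pairsN N}"
  by (force simp: all_edges_def pair_edge_def)

lemma edge_sets_eq_Pow: "edge_sets N = Pow (all_edges N)"
  by (simp add: edge_sets_def all_edges_eq)

lemma card_pairs_with_edge_in: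
  assumes "D \<subseteq> all_edges N"
  shows "card {xy \<in> pairsN N. pair_edge xy \<in> D} = card D"
proof -
  have "pair_edge ` {xy \<in> pairsN N. pair_edge xy \<in> D} = D"
    using assms by (auto simp: all_edges_def)
  moreover have "inj_on pair_edge {xy \<in> pairsN N. pair_edge xy \<in> D}"
    using inj_on_pair_edge by (rule inj_on_subset) blast
  ultimately show ?thesis using card_image by metis
qed

lemma all_edges_memD:
  assumes "{x, y} \<in> all_edges N"
  shows "x \<in> {1..int N}" "y \<in> {1..int N}" "x \<noteq> y"
  using assms by (auto simp: all_edges_def pair_edge_def pairsN_def doubleton_eq_iff)

lemma graph_of_simps [simp]:
  "verts (graph_of N E) = {1..int N}" "edges (graph_of N E) = E"
  by (simp_all add: graph_of_def verts_def edges_def)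

lemma in_G_graph_of:
  assumes "E \<subseteq> all_edges N"
  shows "in_G (graph_of N E)"
proof -
  have "\<exists>x y. x \<noteq> y \<and> x \<in> {1..int N} \<and> y \<in> {1..int N} \<and> e = {x, y}" if e: "e \<in> E" for e
  proof -
    obtain x y where "e = {x, y}" "(x, y) \<in> pairsN N"
      using e assms unfolding all_edges_eq by blast
    then show ?thesis by (intro exI[of _ x] exI[of _ y]) (auto simp: pairsN_def)
  qed
  moreover have "{y. {x, y} \<in> E} \<subseteq> {1..int N}" for x
    using assms all_edges_memD(2) by blast
  then have "finite {y. {x, y} \<in> E}" for x
    by (rule finite_subset) simp
  ultimately show ?thesis unfolding in_G_def by simp
qed

lemma graph_of_in_LL_iff:
  assumes "E \<subseteq> all_edges N"
  shows "graph_of N E \<in> LL L \<longleftrightarrow> short_edges L N \<subseteq> E"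
proof -
  have "short_edges L N \<subseteq> E \<longleftrightarrow> (\<forall>x\<in>{1..int N}. \<forall>y\<in>{1..int N}.
          0 < \<bar>x - y\<bar> \<and> real_of_int \<bar>x - y\<bar> \<le> L \<longrightarrow> {x, y} \<in> E)"
  proof
    assume S: "short_edges L N \<subseteq> E"
    show "\<forall>x\<in>{1..int N}. \<forall>y\<in>{1..int N}. 0 < \<bar>x - y\<bar> \<and> real_of_int \<bar>x - y\<bar> \<le> L \<longrightarrow> {x, y} \<in> E"
    proof (intro ballI impI)
      fix x y assume xy: "x \<in> {1..int N}" "y \<in> {1..int N}" "0 < \<bar>x - y\<bar> \<and> real_of_int \<bar>x - y\<bar> \<le> L"
      have "{min x y, max x y} \<in> short_edges L N"
        unfolding short_edges_def pair_edge_def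
        by (rule image_eqI[of _ _ "(min x y, max x y)"]) (use xy in \<open>auto simp: pairsN_def\<close>)
      moreover have "{min x y, max x y} = {x, y}" by (auto simp: min_def max_def)
      ultimately show "{x, y} \<in> E" using S by auto
    qed
  qed (auto simp: short_edges_def pair_edge_def pairsN_def)
  then show ?thesis using in_G_graph_of[OF assms] by (simp add: LL_def)
qed

section \<open>The edge weights\<close>

lemma edge_prob_nonneg: "0 \<le> edge_prob \<gamma> x y"
  and edge_prob_le_1: "edge_prob \<gamma> x y \<le> 1"
  by (auto simp: edge_prob_def)

lemma one_minus_edge_prob_le:
  assumes "\<gamma> \<ge> 0" "x < y" "real_of_int (y - x) \<le> L"
  shows "1 - edge_prob \<gamma> x y \<le> exp (L powr \<gamma>) * edge_prob \<gamma> x y"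
proof (cases "\<bar>x - y\<bar> = 1")
  case False
  have "real_of_int \<bar>x - y\<bar> powr \<gamma> \<le> L powr \<gamma>"
    using assms by (intro powr_mono2) auto
  then have "1 \<le> exp (L powr \<gamma>) * edge_prob \<gamma> x y"
    using False by (simp add: edge_prob_def mult_exp_exp)
  then show ?thesis using edge_prob_nonneg[of \<gamma> x y] by linarith
qed (simp add: edge_prob_def)

definition edge_factor :: "real \<Rightarrow> int set set \<Rightarrow> int \<times> int \<Rightarrow> real" where
  "edge_factor \<gamma> E xy =
     (if pair_edge xy \<in> E then edge_prob \<gamma> (fst xy) (snd xy) else 1 - edge_prob \<gamma> (fst xy) (snd xy))"

lemma PN_eq_prod_edge_factor: "PN \<gamma> N E = (\<Prod>xy\<in>pairsN N. edge_factor \<gamma> E xy)"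
  unfolding PN_def edge_factor_def pair_edge_def by (simp add: case_prod_beta)

lemma edge_factor_nonneg: "0 \<le> edge_factor \<gamma> E xy"
  using edge_prob_nonneg edge_prob_le_1 by (simp add: edge_factor_def)

lemma PN_nonneg: "0 \<le> PN \<gamma> N E"
  unfolding PN_eq_prod_edge_factor by (intro prod_nonneg edge_factor_nonneg)

lemma tweight_nonneg: "0 \<le> tweight b p \<gamma> N E"
  by (simp add: tweight_def PN_nonneg)

lemma tweight_all_edges_pos: "0 < tweight b p \<gamma> N (all_edges N)"
proof -
  have "0 < edge_factor \<gamma> (all_edges N) xy" if "xy \<in> pairsN N" for xy
    using that by (simp add: edge_factor_def edge_prob_def all_edges_def)
  then show ?thesis
    unfolding tweight_def PN_eq_prod_edge_factor by (simp add: prod_pos)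
qed

lemma PN_eq_0_if_gap:
  assumes "(z, z + 1) \<in> pairsN N" "{z, z + 1} \<notin> E"
  shows "PN \<gamma> N E = 0"
proof -
  have "edge_factor \<gamma> E (z, z + 1) = 0"
    using assms(2) by (simp add: edge_factor_def pair_edge_def edge_prob_def)
  then show ?thesis
    unfolding PN_eq_prod_edge_factor using assms(1) finite_pairsN by (metis prod_zero)
qed

lemma PN_diff_short_edges_le:
  assumes "\<gamma> \<ge> 0" and D: "D \<subseteq> short_edges L N" "D \<subseteq> F"
  shows "PN \<gamma> N (F - D) \<le> exp (L powr \<gamma>) ^ card D * PN \<gamma> N F"
proof -
  define K where "K = exp (L powr \<gamma>)"
  define k where "k xy = (if pair_edge xy \<in> D then K else 1)" for xy
  have "edge_factor \<gamma> (F - D) xy \<le> k xy * edge_factor \<gamma> F xy" if xy: "xy \<in> pairsN N" for xy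
  proof (cases "pair_edge xy \<in> D")
    case True
    then obtain uv where uv: "uv \<in> pairsN N" "real_of_int (snd uv - fst uv) \<le> L" "pair_edge xy = pair_edge uv"
      using D(1) by (auto simp: short_edges_def)
    then have "uv = xy" using inj_on_pair_edge xy by (metis inj_onD)
    then have "1 - edge_prob \<gamma> (fst xy) (snd xy) \<le> K * edge_prob \<gamma> (fst xy) (snd xy)"
      unfolding K_def using assms(1) uv xy by (intro one_minus_edge_prob_le) (auto simp: pairsN_def)
    then show ?thesis using True D(2) by (auto simp: edge_factor_def k_def)
  qed (simp add: edge_factor_def k_def)
  then have "PN \<gamma> N (F - D) \<le> (\<Prod>xy\<in>pairsN N. k xy * edge_factor \<gamma> F xy)"
    unfolding PN_eq_prod_edge_factor by (intro prod_mono) (simp add: edge_factor_nonneg)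
  also have "\<dots> = K ^ card {xy \<in> pairsN N. pair_edge xy \<in> D} * PN \<gamma> N F"
    by (simp add: PN_eq_prod_edge_factor prod.distrib k_def prod.If_cases finite_pairsN Int_def)
  also have "card {xy \<in> pairsN N. pair_edge xy \<in> D} = card D"
    using D(1) short_edges_subset by (intro card_pairs_with_edge_in) blast
  finally show ?thesis by (simp add: K_def)
qed

definition has_unit_edges :: "nat \<Rightarrow> int set set \<Rightarrow> bool" where
  "has_unit_edges N E \<longleftrightarrow> (\<forall>z. 1 \<le> z \<and> z + 1 \<le> int N \<longrightarrow> {z, z + 1} \<in> E)"

lemma PN_eq_0_if_not_unit_edges: "\<not> has_unit_edges N E \<Longrightarrow> PN \<gamma> N E = 0"
  unfolding has_unit_edges_def by (auto intro: PN_eq_0_if_gap simp: pairsN_def)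

section \<open>Graph distances and the functional Hp\<close>

lemma reach_0_eq: "reach g 0 x y \<Longrightarrow> x = y"
  unfolding reach_def by (auto simp: length_Suc_conv)

lemma reach_1_edge: "reach g 1 x y \<Longrightarrow> {x, y} \<in> edges g"
  unfolding reach_def by (auto simp: length_Suc_conv)

lemma reach_refl: "x \<in> verts g \<Longrightarrow> reach g 0 x x"
  unfolding reach_def by (intro conjI exI[of _ "[x]"]) auto

lemma reach_edge: "x \<in> verts g \<Longrightarrow> {x, y} \<in> edges g \<Longrightarrow> reach g 1 x y"
  unfolding reach_def by (intro conjI exI[of _ "[x, y]"]) auto

lemma reach_graph_of_mono: "E \<subseteq> F \<Longrightarrow> reach (graph_of N E) n x y \<Longrightarrow> reach (graph_of N F) n x y"
  unfolding reach_def graph_of_simps by blast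

lemma reach_gdist: "reach g n x y \<Longrightarrow> reach g (gdist g x y) x y"
  unfolding gdist_def by (rule LeastI)

lemma gdist_le: "reach g n x y \<Longrightarrow> gdist g x y \<le> n"
  unfolding gdist_def by (rule Least_le)

lemma reach_unit_steps:
  assumes "has_unit_edges N E" "1 \<le> x" "x \<le> y" "y \<le> int N"
  shows "reach (graph_of N E) (nat (y - x)) x y"
proof -
  define n where "n = nat (y - x)"
  define ps where "ps = map (\<lambda>i. x + int i) [0..<n + 1]"
  have "{ps ! i, ps ! (i + 1)} \<in> E" if "i < n" for i
  proof -
    have "ps ! i = x + int i" "ps ! (i + 1) = x + int i + 1"
      using that by (simp_all add: ps_def nth_map del: upt_Suc)
    moreover have "1 \<le> x + int i" "x + int i + 1 \<le> int N"
      using that assms by (auto simp: n_def)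
    ultimately show ?thesis using assms(1) unfolding has_unit_edges_def by auto
  qed
  moreover have "length ps = n + 1" "hd ps = x" "last ps = y"
    using assms by (simp_all add: ps_def last_map n_def hd_map del: upt_Suc)
  ultimately show ?thesis unfolding reach_def n_def[symmetric] using assms by auto
qed

lemma
  assumes "has_unit_edges N E" "(x, y) \<in> pairsN N"
  shows reach_gdist_unit_edges: "reach (graph_of N E) (gdist (graph_of N E) x y) x y"
    and gdist_le_N: "gdist (graph_of N E) x y \<le> N"
proof -
  have r: "reach (graph_of N E) (nat (y - x)) x y"
    using assms by (intro reach_unit_steps) (auto simp: pairsN_def)
  show "reach (graph_of N E) (gdist (graph_of N E) x y) x y"
    using reach_gdist[OF r] .
  show "gdist (graph_of N E) x y \<le> N"
    using gdist_le[OF r] assms(2) by (auto simp: pairsN_def)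
qed

lemma gdist_graph_of_mono:
  assumes "has_unit_edges N E" "(x, y) \<in> pairsN N" "E \<subseteq> F"
  shows "gdist (graph_of N F) x y \<le> gdist (graph_of N E) x y"
  using assms by (intro gdist_le reach_graph_of_mono[OF _ reach_gdist_unit_edges]) auto

lemma gdist_ge_2_if_not_edge:
  assumes "has_unit_edges N E" "(x, y) \<in> pairsN N" "{x, y} \<notin> E"
  shows "2 \<le> gdist (graph_of N E) x y"
proof -
  note r = reach_gdist_unit_edges[OF assms(1,2)]
  have "gdist (graph_of N E) x y \<noteq> 0"
  proof
    assume "gdist (graph_of N E) x y = 0"
    then have "x = y" using r by (metis reach_0_eq)
    with assms(2) show False by (simp add: pairsN_def)
  qed
  moreover have "gdist (graph_of N E) x y \<noteq> 1"
    using reach_1_edge[of "graph_of N E" x y] r assms(3) by auto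
  ultimately show ?thesis by linarith
qed

lemma gdist_le_1_if_edge: "x \<in> {1..int N} \<Longrightarrow> {x, y} \<in> F \<Longrightarrow> gdist (graph_of N F) x y \<le> 1"
  by (intro gdist_le[OF reach_edge]) auto

definition dist_sum :: "real \<Rightarrow> nat \<Rightarrow> int set set \<Rightarrow> real" where
  "dist_sum p N E = (\<Sum>xy\<in>pairsN N. real (gdist (graph_of N E) (fst xy) (snd xy)) powr p)"

lemma Hp_graph_of: "Hp p (graph_of N E) = (dist_sum p N E / real (N choose 2)) powr (1 / p)"
proof -
  have "{(x, y). x \<in> verts (graph_of N E) \<and> y \<in> verts (graph_of N E) \<and> x < y} = pairsN N"
    by (auto simp: pairsN_def)
  then show ?thesis unfolding Hp_def dist_sum_def by (simp add: case_prod_beta)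
qed

lemma dist_sum_nonneg: "0 \<le> dist_sum p N E"
  unfolding dist_sum_def by (simp add: sum_nonneg)

lemma dist_sum_le:
  assumes "p \<ge> 0" "has_unit_edges N E"
  shows "dist_sum p N E \<le> real N ^ 2 * real N powr p"
proof -
  have "real (gdist (graph_of N E) (fst xy) (snd xy)) powr p \<le> real N powr p"
    if "xy \<in> pairsN N" for xy
    using gdist_le_N[OF assms(2), of "fst xy" "snd xy"] that assms(1) by (intro powr_mono2) auto
  then have "dist_sum p N E \<le> real (card (pairsN N)) * real N powr p"
    unfolding dist_sum_def by (rule sum_bounded_above)
  also have "\<dots> \<le> real N ^ 2 * real N powr p"
    using card_pairsN_le[of N] by (intro mult_right_mono) (simp_all add: power2_eq_square flip: of_nat_mult)
  finally show ?thesis .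
qed

lemma gdist_powr_diff_ge:
  assumes p: "p \<ge> 1" and E: "has_unit_edges N (F - D)" and DF: "D \<subseteq> F" and xy: "(x, y) \<in> pairsN N"
  shows "real (gdist (graph_of N F) x y) powr p + (if {x, y} \<in> D then 1 else 0)
           \<le> real (gdist (graph_of N (F - D)) x y) powr p"
proof -
  have le: "real (gdist (graph_of N F) x y) powr p \<le> real (gdist (graph_of N (F - D)) x y) powr p"
    using gdist_graph_of_mono[OF E xy] p by (intro powr_mono2) auto
  show ?thesis
  proof (cases "{x, y} \<in> D")
    case True
    then have "2 \<le> gdist (graph_of N (F - D)) x y"
      using gdist_ge_2_if_not_edge[OF E xy] by blast
    then have "(2::real) powr p \<le> real (gdist (graph_of N (F - D)) x y) powr p"
      using p by (intro powr_mono2) auto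
    moreover have "(2::real) \<le> 2 powr p"
      using p powr_mono[of 1 p "2::real"] by simp
    ultimately have "(2::real) \<le> real (gdist (graph_of N (F - D)) x y) powr p" by linarith
    moreover have "gdist (graph_of N F) x y \<le> 1"
      using True DF xy by (intro gdist_le_1_if_edge) (auto simp: pairsN_def)
    then have "real (gdist (graph_of N F) x y) powr p \<le> 1"
      using p by (cases "gdist (graph_of N F) x y") auto
    ultimately show ?thesis using True by simp
  qed (use le in simp)
qed

lemma dist_sum_diff_ge:
  assumes "p \<ge> 1" "has_unit_edges N (F - D)" "D \<subseteq> F" "D \<subseteq> all_edges N"
  shows "dist_sum p N F + real (card D) \<le> dist_sum p N (F - D)"
proof -
  have "real (card D) = (\<Sum>xy\<in>pairsN N. if pair_edge xy \<in> D then 1 else 0)"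
    using card_pairs_with_edge_in[OF assms(4)] by (simp add: sum.If_cases finite_pairsN Int_def)
  then have "dist_sum p N F + real (card D)
      = (\<Sum>xy\<in>pairsN N. real (gdist (graph_of N F) (fst xy) (snd xy)) powr p
                           + (if pair_edge xy \<in> D then 1 else 0))"
    by (simp add: dist_sum_def sum.distrib)
  also have "\<dots> \<le> dist_sum p N (F - D)"
    unfolding dist_sum_def pair_edge_def
    using gdist_powr_diff_ge[OF assms(1-3)] by (intro sum_mono) auto
  finally show ?thesis .
qed

lemma Hp_diff_ge:
  assumes "N \<ge> 2" "p \<ge> 1" "has_unit_edges N (F - D)" "D \<subseteq> F" "D \<subseteq> all_edges N"
  shows "Hp p (graph_of N F) + real (card D) * (real N powr (-1 - p) / (2 * p))
           \<le> Hp p (graph_of N (F - D))"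
  unfolding Hp_graph_of
  using assms choose_2_bounds dist_sum_nonneg dist_sum_diff_ge dist_sum_le
  by (intro root_mean_increment) auto

section \<open>Concentration on LL\<close>

definition deletion_factor :: "real \<Rightarrow> real \<Rightarrow> real \<Rightarrow> real \<Rightarrow> nat \<Rightarrow> real" where
  "deletion_factor b p \<gamma> L N =
     exp (L powr \<gamma>) * exp (- (real N powr b) * (real N powr (-1 - p) / (2 * p)))"

lemma tweight_diff_short_edges_le:
  assumes N: "N \<ge> 2" and p: "p \<ge> 1" and \<gamma>: "\<gamma> \<ge> 0" and D: "D \<subseteq> short_edges L N" "D \<subseteq> F"
  shows "tweight b p \<gamma> N (F - D) \<le> deletion_factor b p \<gamma> L N ^ card D * tweight b p \<gamma> N F"
proof (cases "has_unit_edges N (F - D)")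
  case False
  then show ?thesis
    by (simp add: tweight_def PN_eq_0_if_not_unit_edges deletion_factor_def PN_nonneg)
next
  case True
  define c where "c = real N powr (-1 - p) / (2 * p)"
  have "D \<subseteq> all_edges N" using D(1) short_edges_subset by blast
  then have "Hp p (graph_of N F) + real (card D) * c \<le> Hp p (graph_of N (F - D))"
    unfolding c_def using N p True D(2) by (intro Hp_diff_ge)
  then have "exp (- (real N powr b) * Hp p (graph_of N (F - D)))
      \<le> exp (- (real N powr b) * (Hp p (graph_of N F) + real (card D) * c))"
    by (simp add: mult_left_mono)
  also have "\<dots> = exp (- (real N powr b) * Hp p (graph_of N F) + real (card D) * (- (real N powr b) * c))"
    by (simp add: algebra_simps)
  also have "\<dots> = exp (- (real N powr b) * Hp p (graph_of N F)) * exp (- (real N powr b) * c) ^ card D"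
    by (simp only: exp_add exp_of_nat_mult)
  finally have "tweight b p \<gamma> N (F - D)
      \<le> (exp (- (real N powr b) * Hp p (graph_of N F)) * exp (- (real N powr b) * c) ^ card D)
         * (exp (L powr \<gamma>) ^ card D * PN \<gamma> N F)"
    unfolding tweight_def using PN_diff_short_edges_le[OF \<gamma> D]
    by (intro mult_mono) (simp_all add: PN_nonneg)
  then show ?thesis
    by (simp add: tweight_def deletion_factor_def c_def power_mult_distrib mult_ac)
qed

lemma Zc_eq_sum_Pow: "Zc b p \<gamma> N = (\<Sum>E\<in>Pow (all_edges N). tweight b p \<gamma> N E)"
  by (simp add: Zc_def edge_sets_eq_Pow)

lemma Zc_pos: "0 < Zc b p \<gamma> N"
proof -
  have "tweight b p \<gamma> N (all_edges N) \<le> Zc b p \<gamma> N"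
    unfolding Zc_eq_sum_Pow
    by (rule member_le_sum) (simp_all add: finite_all_edges tweight_nonneg)
  then show ?thesis using tweight_all_edges_pos by (rule less_le_trans[rotated])
qed

lemma tilted_prob_nonneg: "0 \<le> tilted_prob b p \<gamma> N Q"
  unfolding tilted_prob_def using Zc_pos by (intro divide_nonneg_pos sum_nonneg tweight_nonneg)

lemma tilted_prob_Not: "tilted_prob b p \<gamma> N Q = 1 - tilted_prob b p \<gamma> N (\<lambda>g. \<not> Q g)"
proof -
  have "Zc b p \<gamma> N = (\<Sum>E\<in>{E \<in> edge_sets N. Q (graph_of N E)}. tweight b p \<gamma> N E)
                     + (\<Sum>E\<in>{E \<in> edge_sets N. \<not> Q (graph_of N E)}. tweight b p \<gamma> N E)"
    unfolding Zc_def by (rule sum_filter_split) (simp add: edge_sets_eq_Pow finite_all_edges)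
  then show ?thesis using Zc_pos[of b p \<gamma> N] by (simp add: tilted_prob_def field_simps)
qed

lemma tilted_prob_not_LL_le:
  assumes "N \<ge> 2" "p \<ge> 1" "\<gamma> \<ge> 0"
  shows "tilted_prob b p \<gamma> N (\<lambda>g. g \<notin> LL L)
           \<le> exp (real N ^ 2 * deletion_factor b p \<gamma> L N) - 1"
proof -
  define w where "w = tweight b p \<gamma> N"
  define good where "good = (\<Sum>F\<in>{F\<in>Pow (all_edges N). short_edges L N \<subseteq> F}. w F)"
  define bad where "bad = (\<Sum>E\<in>{E\<in>Pow (all_edges N). \<not> short_edges L N \<subseteq> E}. w E)"
  define \<epsilon> where "\<epsilon> = (1 + deletion_factor b p \<gamma> L N) ^ card (short_edges L N) - 1"
  have "w (all_edges N) \<le> good"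
    unfolding good_def
    by (rule member_le_sum) (simp_all add: finite_all_edges short_edges_subset w_def tweight_nonneg)
  then have good: "0 < good" using tweight_all_edges_pos[of b p \<gamma> N] by (simp add: w_def)
  have bad: "bad \<le> good * \<epsilon>"
    unfolding bad_def good_def \<epsilon>_def w_def
    using assms finite_all_edges short_edges_subset
    by (intro sum_not_supset_le tweight_diff_short_edges_le) (simp_all add: deletion_factor_def)
  have "tilted_prob b p \<gamma> N (\<lambda>g. g \<notin> LL L) = bad / Zc b p \<gamma> N"
    unfolding tilted_prob_def bad_def w_def edge_sets_eq_Pow
    by (intro arg_cong[where f = "\<lambda>x. x / _"] sum.cong) (auto simp: graph_of_in_LL_iff)
  also have "\<dots> \<le> bad / good"
  proof (rule divide_left_mono)
    have "Zc b p \<gamma> N = good + bad"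
      unfolding Zc_eq_sum_Pow good_def bad_def w_def
      by (rule sum_filter_split) (simp add: finite_all_edges)
    moreover have "0 \<le> bad" unfolding bad_def w_def by (simp add: sum_nonneg tweight_nonneg)
    ultimately show "good \<le> Zc b p \<gamma> N" "0 \<le> bad" "0 < Zc b p \<gamma> N * good"
      using good Zc_pos[of b p \<gamma> N] by simp_all
  qed
  also have "\<dots> \<le> \<epsilon>" using bad good by (simp add: divide_le_eq mult.commute)
  also have "\<dots> \<le> exp (real N ^ 2 * deletion_factor b p \<gamma> L N) - 1"
    unfolding \<epsilon>_def using card_short_edges_le[of L N]
    by (simp add: one_plus_power_le_exp deletion_factor_def power2_eq_square flip: of_nat_mult)
  finally show ?thesis .
qed

lemma deletion_factor_tendsto_0:
  assumes "p \<ge> 1" "b > p + 1"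
  shows "(\<lambda>N. real N ^ 2 * deletion_factor b p \<gamma> L N) \<longlonglongrightarrow> 0"
proof -
  define e c where "e = b - 1 - p" and "c = 1 / (2 * p)"
  have "e > 0" "c > 0" using assms by (simp_all add: e_def c_def)
  then have lim: "(\<lambda>N::nat. real N ^ 2 * (exp (L powr \<gamma>) * exp (- (c * real N powr e)))) \<longlonglongrightarrow> 0"
    by real_asymp
  have eq: "real N powr b * real N powr (-1 - p) / (2 * p) = c * real N powr e"
    if "N > 0" for N
  proof -
    have "b + (-1 - p) = e" by (simp add: e_def)
    then have "real N powr b * real N powr (-1 - p) = real N powr e"
      by (simp only: powr_add[symmetric])
    then show ?thesis by (simp add: c_def)
  qed
  have "\<forall>\<^sub>F N in sequentially. real N ^ 2 * (exp (L powr \<gamma>) * exp (- (c * real N powr e)))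
               = real N ^ 2 * deletion_factor b p \<gamma> L N"
    using eventually_gt_at_top[of 0] by eventually_elim (simp add: deletion_factor_def eq)
  then show ?thesis using lim by (rule Lim_transform_eventually[rotated])
qed

lemma tilted_prob_not_LL_tendsto_0:
  assumes "\<gamma> \<ge> 0" "p \<ge> 1" "b > p + 1"
  shows "(\<lambda>N. tilted_prob b p \<gamma> N (\<lambda>g. g \<notin> LL L)) \<longlonglongrightarrow> 0"
proof (rule tendsto_sandwich[OF _ _ tendsto_const])
  show "\<forall>\<^sub>F N in sequentially. 0 \<le> tilted_prob b p \<gamma> N (\<lambda>g. g \<notin> LL L)"
    by (simp add: tilted_prob_nonneg)
  show "\<forall>\<^sub>F N in sequentially.
          tilted_prob b p \<gamma> N (\<lambda>g. g \<notin> LL L) \<le> exp (real N ^ 2 * deletion_factor b p \<gamma> L N) - 1"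
    using eventually_ge_at_top[of 2] by eventually_elim (use assms tilted_prob_not_LL_le in auto)
  have "(\<lambda>N. exp (real N ^ 2 * deletion_factor b p \<gamma> L N) - 1) \<longlonglongrightarrow> exp 0 - 1"
    using assms by (intro tendsto_intros deletion_factor_tendsto_0)
  then show "(\<lambda>N. exp (real N ^ 2 * deletion_factor b p \<gamma> L N) - 1) \<longlonglongrightarrow> 0" by simp
qed

section \<open>Balls of radius one\<close>

lemma reach_in_verts:
  assumes g: "in_G g" and r: "reach g n x y"
  shows "y \<in> verts g"
proof (cases n)
  case 0
  then have "x = y" using r reach_0_eq by blast
  then show ?thesis using r by (simp add: reach_def)
next
  case (Suc k)
  obtain ps where ps: "length ps = n + 1" "last ps = y" "{ps ! k, ps ! (k + 1)} \<in> edges g"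
    using r Suc unfolding reach_def by auto
  then have "ps \<noteq> []" by auto
  then have "y \<in> {ps ! k, ps ! (k + 1)}" using ps Suc by (simp add: last_conv_nth)
  moreover obtain a c where "a \<in> verts g" "c \<in> verts g" "{ps ! k, ps ! (k + 1)} = {a, c}"
    using ps(3) g unfolding in_G_def by blast
  ultimately show ?thesis by auto
qed

lemma verts_ball: "verts (fst (ball (g, v) R)) = {x. \<exists>n\<le>R. reach g n v x}"
  by (simp add: ball_def Let_def verts_def)

lemma edges_ball: "edges (fst (ball x R)) = {e \<in> edges (fst x). e \<subseteq> verts (fst (ball x R))}"
  by (simp add: ball_def Let_def verts_def edges_def)

lemma snd_ball: "snd (ball x R) = snd x"
  by (simp add: ball_def Let_def)

lemma card_verts_ball_1_ge:
  assumes LL: "graph_of N E \<in> LL (real k)" and v: "v \<in> {1..int N}" and k: "k < N"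
  shows "k + 1 \<le> card (verts (fst (ball (graph_of N E, v) 1)))"
proof -
  define B where "B = verts (fst (ball (graph_of N E, v) 1))"
  have "in_G (graph_of N E)" using LL by (simp add: LL_def)
  then have "B \<subseteq> {1..int N}"
    unfolding B_def verts_ball using reach_in_verts by fastforce
  then have fin: "finite B" by (rule finite_subset) simp
  define T where "T = (if v + int k \<le> int N then {v..v + int k} else {int N - int k..int N})"
  have "T \<subseteq> B"
  proof
    fix s assume s: "s \<in> T"
    then have s': "s \<in> {1..int N}" "\<bar>s - v\<bar> \<le> int k"
      using v k by (auto simp: T_def split: if_splits)
    show "s \<in> B"
    proof (cases "s = v")
      case True
      then show ?thesis using reach_refl[of v "graph_of N E"] v by (auto simp: B_def verts_ball)
    next
      case False
      then have "{v, s} \<in> E"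
        using LL v s' unfolding LL_def by (auto simp: abs_minus_commute)
      then have "reach (graph_of N E) 1 v s" using v by (intro reach_edge) auto
      then show ?thesis by (auto simp: B_def verts_ball)
    qed
  qed
  then have "card T \<le> card B" using fin by (rule card_mono[rotated])
  moreover have "card T = k + 1" by (simp add: T_def)
  ultimately show ?thesis by (simp add: B_def)
qed

lemma card_verts_rg_iso:
  assumes "rg_iso x h"
  shows "card (verts (fst h)) = card (verts (fst x))"
proof -
  have "verts (fst h) = (\<lambda>z. z - snd x + snd h) ` verts (fst x)"
    using assms by (simp add: rg_iso_def Let_def)
  moreover have "inj_on (\<lambda>z. z - snd x + snd h) (verts (fst x))" by (rule inj_onI) simp
  ultimately show ?thesis by (simp add: card_image)
qed

lemma rooted_tilted_prob_nonneg: "0 \<le> rooted_tilted_prob b p \<gamma> N Q"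
  unfolding rooted_tilted_prob_def
  using Zc_pos[of b p \<gamma> N] by (intro sum_nonneg) (simp add: tweight_nonneg)

lemma rooted_tilted_prob_ball_le:
  assumes N: "card (verts (fst h)) < N"
  shows "rooted_tilted_prob b p \<gamma> N (\<lambda>x. rg_iso (ball x 1) h)
           \<le> tilted_prob b p \<gamma> N (\<lambda>g. g \<notin> LL (real (card (verts (fst h)))))"
proof -
  define k where "k = card (verts (fst h))"
  define w where "w E = tweight b p \<gamma> N E / Zc b p \<gamma> N" for E
  have w: "0 \<le> w E" for E
    using Zc_pos[of b p \<gamma> N] by (simp add: w_def tweight_nonneg)
  have inner: "(\<Sum>v\<in>{1..int N}. if rg_iso (ball (graph_of N E, v) 1) h then w E / real N else 0)
      \<le> (if graph_of N E \<notin> LL (real k) then w E else 0)" for E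
  proof (cases "graph_of N E \<in> LL (real k)")
    case True
    have "\<not> rg_iso (ball (graph_of N E, v) 1) h" if "v \<in> {1..int N}" for v
      using card_verts_rg_iso card_verts_ball_1_ge[OF True that] N by (fastforce simp: k_def)
    then show ?thesis using True by simp
  next
    case False
    have "(\<Sum>v\<in>{1..int N}. if rg_iso (ball (graph_of N E, v) 1) h then w E / real N else 0)
        \<le> (\<Sum>v\<in>{1..int N}. w E / real N)"
      using w by (intro sum_mono) auto
    then show ?thesis using False N by simp
  qed
  have "rooted_tilted_prob b p \<gamma> N (\<lambda>x. rg_iso (ball x 1) h)
      = (\<Sum>E\<in>edge_sets N. \<Sum>v\<in>{1..int N}. if rg_iso (ball (graph_of N E, v) 1) h then w E / real N else 0)"
    by (simp only: rooted_tilted_prob_def w_def divide_divide_eq_left)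
  also have "\<dots> \<le> (\<Sum>E\<in>edge_sets N. if graph_of N E \<notin> LL (real k) then w E else 0)"
    by (intro sum_mono inner)
  also have "\<dots> = tilted_prob b p \<gamma> N (\<lambda>g. g \<notin> LL (real k))"
    unfolding tilted_prob_def w_def
    by (simp add: sum.inter_filter[symmetric] sum_divide_distrib edge_sets_eq_Pow finite_all_edges)
  finally show ?thesis by (simp add: k_def)
qed

definition finite_rooted_graphs :: "rgraph set" where
  "finite_rooted_graphs =
     {h. rooted_in_G h \<and> finite (verts (fst h)) \<and> edges (fst h) \<subseteq> Pow (verts (fst h))}"

lemma countable_finite_rooted_graphs: "countable finite_rooted_graphs"
proof (rule countable_subset)
  show "countable (({V :: int set. finite V} \<times> {Es. finite Es \<and> Es \<subseteq> {A :: int set. finite A}})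
                    \<times> (UNIV :: int set))"
    by (intro countable_SIGMA countable_Collect_finite countable_Collect_finite_subset) simp_all
  show "finite_rooted_graphs \<subseteq> ({V. finite V} \<times> {Es. finite Es \<and> Es \<subseteq> {A. finite A}}) \<times> UNIV"
  proof
    fix h assume "h \<in> finite_rooted_graphs"
    then obtain V Es r where h: "h = ((V, Es), r)" "finite V" "Es \<subseteq> Pow V"
      by (cases h) (auto simp: finite_rooted_graphs_def verts_def edges_def)
    then have "finite Es" by (meson finite_Pow_iff finite_subset)
    moreover have "Es \<subseteq> {A. finite A}" using h(2,3) by (auto intro: finite_subset)
    ultimately show "h \<in> ({V. finite V} \<times> {Es. finite Es \<and> Es \<subseteq> {A. finite A}}) \<times> UNIV"
      using h by simp
  qed
qed

lemma ball_1_in_finite_rooted_graphs: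
  assumes "rooted_in_G x"
  shows "ball x 1 \<in> finite_rooted_graphs"
proof -
  obtain g r where x: "x = (g, r)" and g: "in_G g" and r: "r \<in> verts g"
    using assms by (cases x) (auto simp: rooted_in_G_def)
  define B where "B = verts (fst (ball x 1))"
  have "B \<subseteq> insert r {y. {r, y} \<in> edges g}"
  proof
    fix y assume "y \<in> B"
    then obtain n where "n \<le> 1" "reach g n r y" by (auto simp: B_def x verts_ball)
    then show "y \<in> insert r {y. {r, y} \<in> edges g}"
      using reach_0_eq[of g r y] reach_1_edge[of g r y] by (cases n) auto
  qed
  moreover have "finite {y. {r, y} \<in> edges g}" using g r by (simp add: in_G_def)
  ultimately have B: "finite B" by (simp add: finite_subset)
  have E: "edges (fst (ball x 1)) = {e \<in> edges g. e \<subseteq> B}"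
    using edges_ball[of x 1] by (simp add: x B_def)
  have edge: "\<exists>a c. a \<noteq> c \<and> a \<in> B \<and> c \<in> B \<and> e = {a, c}" if "e \<in> edges (fst (ball x 1))" for e
  proof -
    have e: "e \<in> edges g" "e \<subseteq> B" using that unfolding E by blast+
    obtain a c where "a \<noteq> c" "e = {a, c}" using g e(1) unfolding in_G_def by blast
    then show ?thesis using e(2) by auto
  qed
  have "{c. {a, c} \<in> edges (fst (ball x 1))} \<subseteq> B" for a
    unfolding E by blast
  then have fin: "finite {c. {a, c} \<in> edges (fst (ball x 1))}" for a
    using B by (rule finite_subset)
  have "in_G (fst (ball x 1))"
    unfolding in_G_def B_def[symmetric] by (intro conjI ballI edge fin)
  moreover have "snd (ball x 1) \<in> B"
    unfolding B_def snd_ball x verts_ball using reach_refl[OF r] by auto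
  moreover have "edges (fst (ball x 1)) \<subseteq> Pow B" unfolding E by blast
  ultimately show ?thesis
    using B by (simp add: finite_rooted_graphs_def rooted_in_G_def B_def)
qed

lemma rg_iso_refl: "rg_iso h h"
  by (simp add: rg_iso_def)

lemma not_conv_distr_if_balls_vanish:
  assumes M: "random_rooted_graph M" and conv: "conv_distr \<mu> M"
    and vanish: "\<And>h. h \<in> finite_rooted_graphs \<Longrightarrow> (\<lambda>N. \<mu> N (\<lambda>x. rg_iso (ball x 1) h)) \<longlonglongrightarrow> 0"
  shows False
proof -
  interpret prob_space M using M by (simp add: random_rooted_graph_def)
  define A where "A h = {x \<in> space M. rg_iso (ball x 1) h}" for h
  have null: "A h \<in> null_sets M" if h: "h \<in> finite_rooted_graphs" for h
  proof -
    have "(\<lambda>N. \<mu> N (\<lambda>x. rg_iso (ball x 1) h)) \<longlonglongrightarrow> measure M (A h)"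
      using conv h unfolding conv_distr_def A_def finite_rooted_graphs_def by blast
    then have "measure M (A h) = 0" using vanish[OF h] by (rule LIMSEQ_unique)
    moreover have "A h \<in> sets M" using M unfolding random_rooted_graph_def A_def by blast
    ultimately show ?thesis by (simp add: null_sets_def emeasure_eq_measure)
  qed
  have "(\<Union>h\<in>finite_rooted_graphs. A h) \<in> null_sets M"
    using countable_finite_rooted_graphs null by (rule null_sets_UN')
  moreover have "space M \<subseteq> (\<Union>h\<in>finite_rooted_graphs. A h)"
  proof
    fix x assume x: "x \<in> space M"
    then have "ball x 1 \<in> finite_rooted_graphs"
      using M ball_1_in_finite_rooted_graphs unfolding random_rooted_graph_def by blast
    moreover have "x \<in> A (ball x 1)" using x rg_iso_refl by (simp add: A_def)
    ultimately show "x \<in> (\<Union>h\<in>finite_rooted_graphs. A h)" by blast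
  qed
  ultimately have "space M \<in> null_sets M" by (rule null_sets_subset[OF _ sets.top])
  then show False using emeasure_space_1 by (simp add: null_sets_def)
qed

lemma rooted_tilted_prob_ball_tendsto_0:
  assumes "\<gamma> \<ge> 0" "p \<ge> 1" "b > p + 1"
  shows "(\<lambda>N. rooted_tilted_prob b p \<gamma> N (\<lambda>x. rg_iso (ball x 1) h)) \<longlonglongrightarrow> 0"
proof (rule tendsto_sandwich[OF _ _ tendsto_const tilted_prob_not_LL_tendsto_0[OF assms]])
  show "\<forall>\<^sub>F N in sequentially. 0 \<le> rooted_tilted_prob b p \<gamma> N (\<lambda>x. rg_iso (ball x 1) h)"
    by (simp add: rooted_tilted_prob_nonneg)
  show "\<forall>\<^sub>F N in sequentially. rooted_tilted_prob b p \<gamma> N (\<lambda>x. rg_iso (ball x 1) h)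
          \<le> tilted_prob b p \<gamma> N (\<lambda>g. g \<notin> LL (real (card (verts (fst h)))))"
    using eventually_gt_at_top[of "card (verts (fst h))"]
    by eventually_elim (rule rooted_tilted_prob_ball_le)
qed

theorem proposition3:
  fixes \<gamma> p b :: real
  assumes "\<gamma> > 1" and "p \<ge> 1" and "b > p + 1"
  shows "(\<forall>L::real. L > 0 \<longrightarrow>
           ((\<lambda>N. tilted_prob b p \<gamma> N (\<lambda>g. g \<in> LL L)) \<longlonglongrightarrow> 1)) \<and>
         \<not> (\<exists>M. random_rooted_graph M \<and> conv_distr (rooted_tilted_prob b p \<gamma>) M)"
proof -
  have \<gamma>: "\<gamma> \<ge> 0" \<comment> \<open>the only use of \<open>\<gamma> > 1\<close>\<close>
    using assms(1) by simp
  have "(\<lambda>N. tilted_prob b p \<gamma> N (\<lambda>g. g \<in> LL L)) \<longlonglongrightarrow> 1" for L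
    using tendsto_diff[OF tendsto_const tilted_prob_not_LL_tendsto_0[OF \<gamma> assms(2,3)], of 1 L]
    by (simp only: tilted_prob_Not[of b p \<gamma> _ "\<lambda>g. g \<in> LL L"] diff_zero)
  moreover have "\<not> conv_distr (rooted_tilted_prob b p \<gamma>) M" if "random_rooted_graph M" for M
    using not_conv_distr_if_balls_vanish[where \<mu> = "rooted_tilted_prob b p \<gamma>"] that
      rooted_tilted_prob_ball_tendsto_0[OF \<gamma> assms(2,3)] by blast
  ultimately show ?thesis by blast
qed

end
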